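(* Let $G$ be a disconnected graph which has only finitely many non-trivial connected components, and such that for each connected component $H$ of $G$, every connected graph equimorphic to $H$ is isomorphic to $H$. Then either $G$ has infinitely many pairwise non-isomorphic disconnected siblings, or every sibling of $G$ is isomorphic to $G$.
   Context: Graphs are undirected and loopless. $G$ embeds into $G'$ if $G$ is isomorphic to an induced subgraph of $G'$; $G,G'$ are equimorphic if each embeds into the other; a sibling of $G$ is a graph equimorphic to $G$. A connected component is trivial if it consists of a single vertex. *)

theory Defs
  imports Main
begin

type_synonym 'a graph = "'a set \<times> ('a \<Rightarrow> 'a \<Rightarrow> bool)"

definition verts :: "'a graph \<Rightarrow> 'a set" where
  "verts G = fst G"

definition adj :: "'a graph \<Rightarrow> 'a \<Rightarrow> 'a \<Rightarrow> bool" where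
  "adj G = snd G"

definition graph :: "'a graph \<Rightarrow> bool" where
  "graph G \<longleftrightarrow> (\<forall>x y. adj G x y \<longrightarrow> x \<in> verts G \<and> y \<in> verts G \<and> x \<noteq> y \<and> adj G y x)"

definition iso :: "'a graph \<Rightarrow> 'b graph \<Rightarrow> bool" where
  "iso G H \<longleftrightarrow> (\<exists>f. bij_betw f (verts G) (verts H) \<and>
     (\<forall>x\<in>verts G. \<forall>y\<in>verts G. adj G x y \<longleftrightarrow> adj H (f x) (f y)))"

definition embeds :: "'a graph \<Rightarrow> 'b graph \<Rightarrow> bool" where
  "embeds G H \<longleftrightarrow> (\<exists>f. inj_on f (verts G) \<and> f ` verts G \<subseteq> verts H \<and>
     (\<forall>x\<in>verts G. \<forall>y\<in>verts G. adj G x y \<longleftrightarrow> adj H (f x) (f y)))"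

definition equimorphic :: "'a graph \<Rightarrow> 'b graph \<Rightarrow> bool" where
  "equimorphic G H \<longleftrightarrow> embeds G H \<and> embeds H G"

definition induced :: "'a graph \<Rightarrow> 'a set \<Rightarrow> 'a graph" where
  "induced G W = (W, \<lambda>x y. adj G x y \<and> x \<in> W \<and> y \<in> W)"

definition reach :: "'a graph \<Rightarrow> 'a \<Rightarrow> 'a \<Rightarrow> bool" where
  "reach G = (adj G)\<^sup>*\<^sup>*"

definition connected_graph :: "'a graph \<Rightarrow> bool" where
  "connected_graph G \<longleftrightarrow> verts G \<noteq> {} \<and> (\<forall>x\<in>verts G. \<forall>y\<in>verts G. reach G x y)"

definition disconnected :: "'a graph \<Rightarrow> bool" where
  "disconnected G \<longleftrightarrow> verts G \<noteq> {} \<and> \<not> connected_graph G"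

definition component_verts :: "'a graph \<Rightarrow> 'a \<Rightarrow> 'a set" where
  "component_verts G x = {y \<in> verts G. reach G x y}"

definition components :: "'a graph \<Rightarrow> 'a graph set" where
  "components G = {induced G (component_verts G x) | x. x \<in> verts G}"

definition trivial_component :: "'a graph \<Rightarrow> bool" where
  "trivial_component H \<longleftrightarrow> (\<exists>v. verts H = {v})"

definition sibling :: "'a graph \<Rightarrow> 'a graph \<Rightarrow> bool" where
  "sibling G' G \<longleftrightarrow> graph G' \<and> equimorphic G' G"

end

theory Submission
  imports Defs "HOL-Combinatorics.Permutations"
begin

text \<open>Suppose \<open>G\<close> has no infinite family of pairwise non-isomorphic disconnected siblings.
  Two constructions would produce such a family, told apart by their numbers of (nontrivial)
  components, so both are ruled out: a self-embedding \<open>e\<close> with a connected piece \<open>Z\<close> of \<open>G\<close>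
  outside \<open>e G\<close> and not adjacent to it (take \<open>e\<^sup>m G\<close> together with the copies \<open>e\<^sup>j Z\<close>,
  \<open>j < m\<close>), and, if there are infinitely many isolated vertices, a self-embedding into the
  non-isolated part (add \<open>m\<close> isolated vertices to it).

  Now let \<open>f\<close> embed \<open>G\<close> into a sibling \<open>G'\<close> and \<open>g\<close> embed \<open>G'\<close> into \<open>G\<close>. By the first
  obstruction \<open>f\<close> induces a bijection between the finitely many nontrivial components, and
  \<open>g \<circ> f\<close> permutes those of \<open>G\<close>; so every component is equimorphic, hence by hypothesis
  isomorphic, to its partner. By both obstructions the isolated vertices that \<open>f\<close> or \<open>g\<close>
  send to non-isolated ones are negligible, so \<open>G\<close> and \<open>G'\<close> have equally many isolated
  vertices. Gluing yields an isomorphism.\<close>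

definition embedding :: "('a \<Rightarrow> 'b) \<Rightarrow> 'a graph \<Rightarrow> 'b graph \<Rightarrow> bool" where
  "embedding f G H \<longleftrightarrow> inj_on f (verts G) \<and> f ` verts G \<subseteq> verts H \<and>
     (\<forall>x\<in>verts G. \<forall>y\<in>verts G. adj G x y \<longleftrightarrow> adj H (f x) (f y))"

lemma embeds_iff_embedding: "embeds G H \<longleftrightarrow> (\<exists>f. embedding f G H)"
  unfolding embeds_def embedding_def by blast

lemma iso_iff_embedding: "iso G H \<longleftrightarrow> (\<exists>f. embedding f G H \<and> f ` verts G = verts H)"
  unfolding iso_def embedding_def bij_betw_def by auto

lemma verts_induced [simp]: "verts (induced G W) = W"
  by (simp add: induced_def verts_def)

lemma adj_induced [simp]: "adj (induced G W) x y \<longleftrightarrow> adj G x y \<and> x \<in> W \<and> y \<in> W"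
  by (simp add: induced_def adj_def)

lemma graph_induced: "graph G \<Longrightarrow> graph (induced G W)"
  unfolding graph_def by auto

lemma graphD: "graph G \<Longrightarrow> adj G x y \<Longrightarrow> x \<in> verts G \<and> y \<in> verts G \<and> x \<noteq> y \<and> adj G y x"
  unfolding graph_def by blast

lemma reach_refl [simp]: "reach G x x"
  by (simp add: reach_def)

lemma reach_adj: "adj G x y \<Longrightarrow> reach G x y"
  by (simp add: reach_def)

lemma reach_trans: "reach G x y \<Longrightarrow> reach G y z \<Longrightarrow> reach G x z"
  unfolding reach_def by (rule rtranclp_trans)

lemma reach_step: "reach G x y \<Longrightarrow> adj G y z \<Longrightarrow> reach G x z"
  unfolding reach_def by (rule rtranclp.rtrancl_into_rtrancl)

lemma reach_sym:
  assumes "graph G" "reach G x y"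
  shows "reach G y x"
  using assms(2) unfolding reach_def
proof (induction rule: rtranclp_induct)
  case (step y z)
  then show ?case
    using graphD[OF assms(1) step(2)] by (meson converse_rtranclp_into_rtranclp)
qed simp

lemma reach_closed:
  assumes "reach G x y" "x \<in> Y" "\<And>a b. a \<in> Y \<Longrightarrow> adj G a b \<Longrightarrow> b \<in> Y"
  shows "y \<in> Y"
  using assms(1,2) unfolding reach_def
  by (induction rule: rtranclp_induct) (auto intro: assms(3))

lemma reach_induced_closed:
  assumes "reach G x y" "x \<in> W" "\<And>a b. a \<in> W \<Longrightarrow> adj G a b \<Longrightarrow> b \<in> W"
  shows "reach (induced G W) x y"
  using assms(1,2) unfolding reach_def
proof (induction rule: rtranclp_induct)
  case (step y z)
  have "y \<in> W"
    using reach_closed[of G x y W] step assms(3) unfolding reach_def by blast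
  then have "adj (induced G W) y z"
    using step(2) assms(3) by simp
  then show ?case
    using step by (meson rtranclp.rtrancl_into_rtrancl)
qed simp

lemma embedding_id: "embedding id G G"
  unfolding embedding_def by auto

lemma embeds_refl: "embeds G G"
  unfolding embeds_iff_embedding using embedding_id by blast

lemma embedding_comp: "embedding f G H \<Longrightarrow> embedding g H K \<Longrightarrow> embedding (g \<circ> f) G K"
  unfolding embedding_def by (auto simp: comp_inj_on inj_on_subset image_subset_iff)

lemma embedding_funpow: "embedding e G G \<Longrightarrow> embedding (e ^^ n) G G"
  by (induction n) (simp_all add: embedding_id embedding_comp)

lemma embeds_trans: "embeds G H \<Longrightarrow> embeds H K \<Longrightarrow> embeds G K"
  unfolding embeds_iff_embedding using embedding_comp by blast

lemma embedding_induced: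
  "embedding f G H \<Longrightarrow> C \<subseteq> verts G \<Longrightarrow> f ` C \<subseteq> D \<Longrightarrow> embedding f (induced G C) (induced H D)"
  unfolding embedding_def by (auto simp: inj_on_def subset_iff)

lemma embedding_into_induced:
  "embedding f G H \<Longrightarrow> f ` verts G \<subseteq> W \<Longrightarrow> embedding f G (induced H W)"
  unfolding embedding_def by auto

lemma embeds_induced: "W \<subseteq> verts G \<Longrightarrow> embeds (induced G W) G"
  unfolding embeds_iff_embedding embedding_def by (intro exI[of _ id]) auto

lemma embedding_reach:
  assumes "graph G" "embedding f G H" "reach G x y"
  shows "reach H (f x) (f y)"
  using assms(3) unfolding reach_def
proof (induction rule: rtranclp_induct)
  case (step y z)
  have "adj H (f y) (f z)"
    using graphD[OF assms(1) step(2)] assms(2) step(2) unfolding embedding_def by blast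
  then show ?case
    using step(3) by (meson rtranclp.rtrancl_into_rtrancl)
qed simp

lemma embedding_inv_into:
  assumes "embedding f G H" "f ` verts G = verts H"
  shows "embedding (inv_into (verts G) f) H G"
proof -
  have "bij_betw f (verts G) (verts H)"
    using assms unfolding embedding_def bij_betw_def by blast
  then show ?thesis
    using assms(1) unfolding embedding_def
    by (auto simp: bij_betw_def inv_into_into f_inv_into_f inj_on_inv_into)
qed

lemma iso_refl: "iso G G"
  unfolding iso_iff_embedding using embedding_id[of G] by auto

lemma iso_sym: "iso G H \<Longrightarrow> iso H G"
  unfolding iso_iff_embedding
  by (metis embedding_inv_into embedding_def bij_betw_def bij_betw_inv_into)

definition nonisolated :: "'a graph \<Rightarrow> 'a set" where
  "nonisolated G = {x. \<exists>y. adj G x y}"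

definition isolated :: "'a graph \<Rightarrow> 'a set" where
  "isolated G = verts G - nonisolated G"

lemma nonisolated_subset: "graph G \<Longrightarrow> nonisolated G \<subseteq> verts G"
  unfolding nonisolated_def using graphD by fastforce

lemma adj_nonisolated:
  assumes "graph G" "adj G x y"
  shows "x \<in> nonisolated G" "y \<in> nonisolated G"
  using assms graphD[OF assms] unfolding nonisolated_def by blast+

lemma reach_from_isolated: "x \<notin> nonisolated G \<Longrightarrow> reach G x y \<Longrightarrow> y = x"
  using reach_closed[of G x y "{x}"] by (auto simp: nonisolated_def)

lemma isolated_not_adj:
  assumes "graph G" "x \<notin> nonisolated G"
  shows "\<not> adj G x y" "\<not> adj G y x"
  using adj_nonisolated[OF assms(1), of x y] adj_nonisolated[OF assms(1), of y x] assms(2)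
  by auto

lemma isolated_in_induced:
  assumes "graph G" "x \<in> isolated G"
  shows "x \<notin> nonisolated (induced G W)"
  using assms isolated_not_adj(1)[OF assms(1)] unfolding isolated_def nonisolated_def by simp

lemma embedding_nonisolated:
  assumes "graph G" "embedding f G H" "x \<in> nonisolated G"
  shows "f x \<in> nonisolated H"
proof -
  obtain y where "adj G x y"
    using assms(3) by (auto simp: nonisolated_def)
  then have "adj H (f x) (f y)"
    using assms(2) graphD[OF assms(1)] unfolding embedding_def by blast
  then show ?thesis
    by (auto simp: nonisolated_def)
qed

lemma component_verts_self: "x \<in> verts G \<Longrightarrow> x \<in> component_verts G x"
  by (simp add: component_verts_def)

lemma component_verts_subset: "component_verts G x \<subseteq> verts G"
  by (auto simp: component_verts_def)

lemma component_verts_eq: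
  assumes "graph G" "reach G a b"
  shows "component_verts G a = component_verts G b"
proof -
  have "reach G a y \<longleftrightarrow> reach G b y" for y
    using reach_trans[OF reach_sym[OF assms]] reach_trans[OF assms(2)] by blast
  then show ?thesis
    unfolding component_verts_def by simp
qed

lemma component_verts_eq_of_mem:
  "graph G \<Longrightarrow> y \<in> component_verts G x \<Longrightarrow> component_verts G y = component_verts G x"
  using component_verts_eq[of G x y] by (auto simp: component_verts_def)

lemma component_verts_closed:
  assumes "graph G" "a \<in> component_verts G x" "adj G a b"
  shows "b \<in> component_verts G x"
  using assms(2) reach_step[OF _ assms(3)] graphD[OF assms(1,3)]
  by (simp add: component_verts_def)

lemma connected_component:
  assumes "graph G" "x \<in> verts G"
  shows "connected_graph (induced G (component_verts G x))"
proof -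
  let ?C = "component_verts G x"
  have from_x: "reach (induced G ?C) x y" if "y \<in> ?C" for y
  proof (rule reach_induced_closed)
    show "reach G x y"
      using that by (simp add: component_verts_def)
    show "x \<in> ?C"
      using component_verts_self[OF assms(2)] .
  qed (use component_verts_closed[OF assms(1)] in blast)
  have "reach (induced G ?C) y z" if "y \<in> ?C" "z \<in> ?C" for y z
    using reach_sym[OF graph_induced[OF assms(1)] from_x[OF that(1)]] from_x[OF that(2)]
    by (rule reach_trans)
  then show ?thesis
    using component_verts_self[OF assms(2)] unfolding connected_graph_def by auto
qed

lemma component_verts_nonisolated:
  assumes "graph G" "x \<in> nonisolated G"
  shows "component_verts G x \<subseteq> nonisolated G"
proof
  fix y assume "y \<in> component_verts G x"
  then have "reach G y x"
    using reach_sym[OF assms(1)] by (simp add: component_verts_def)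
  then show "y \<in> nonisolated G"
    using reach_from_isolated assms(2) by metis
qed

lemma component_verts_isolated: "x \<in> isolated G \<Longrightarrow> component_verts G x = {x}"
  using reach_from_isolated[of x G] unfolding isolated_def component_verts_def by auto

lemma embedding_component_verts:
  assumes "graph G" "embedding f G H" "x \<in> verts G"
  shows "f ` component_verts G x \<subseteq> component_verts H (f x)"
  using embedding_reach[OF assms(1,2)] assms(2)
  by (auto simp: component_verts_def embedding_def)

definition nontrivial_components :: "'a graph \<Rightarrow> 'a set set" where
  "nontrivial_components G = {component_verts G x | x. x \<in> nonisolated G}"

lemma component_in_nontrivial_components:
  "x \<in> nonisolated G \<Longrightarrow> component_verts G x \<in> nontrivial_components G"
  unfolding nontrivial_components_def by blast

lemma nontrivial_componentsE:
  assumes "C \<in> nontrivial_components G"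
  obtains x where "x \<in> nonisolated G" "C = component_verts G x"
  using assms unfolding nontrivial_components_def by blast

lemma nontrivial_componentsD:
  assumes "graph G" "C \<in> nontrivial_components G" "z \<in> C"
  shows "C = component_verts G z" "z \<in> nonisolated G"
proof -
  obtain x where x: "x \<in> nonisolated G" "C = component_verts G x"
    using assms(2) by (rule nontrivial_componentsE)
  then show "C = component_verts G z"
    using component_verts_eq_of_mem[OF assms(1), of z x] assms(3) x(2) by simp
  show "z \<in> nonisolated G"
    using component_verts_nonisolated[OF assms(1) x(1)] x(2) assms(3) by blast
qed

lemma nontrivial_component_in_components:
  assumes "graph G" "C \<in> nontrivial_components G"
  shows "induced G C \<in> components G" "connected_graph (induced G C)"
proof -
  obtain x where x: "x \<in> nonisolated G" "C = component_verts G x"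
    using assms(2) by (rule nontrivial_componentsE)
  then have "x \<in> verts G"
    using nonisolated_subset[OF assms(1)] by blast
  then show "induced G C \<in> components G" "connected_graph (induced G C)"
    using connected_component[OF assms(1)] x(2) unfolding components_def by blast+
qed

lemma singleton_not_nontrivial_component:
  assumes "graph G" "x \<in> isolated G"
  shows "{x} \<notin> nontrivial_components G"
  using nontrivial_componentsD(2)[OF assms(1), of "{x}" x] assms(2) unfolding isolated_def by blast

lemma finite_nontrivial_components:
  assumes "graph G" "finite {H \<in> components G. \<not> trivial_component H}"
  shows "finite (nontrivial_components G)"
proof -
  have "nontrivial_components G \<subseteq> verts ` {H \<in> components G. \<not> trivial_component H}"
  proof
    fix C assume "C \<in> nontrivial_components G"
    then obtain x where x: "x \<in> nonisolated G" "C = component_verts G x"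
      by (rule nontrivial_componentsE)
    then obtain y where xy: "adj G x y"
      unfolding nonisolated_def by blast
    have "x \<in> verts G" "y \<in> verts G" "x \<noteq> y"
      using graphD[OF assms(1) xy] by auto
    then have "x \<in> C" "y \<in> C"
      using x(2) reach_adj[OF xy] by (simp_all add: component_verts_def)
    have "\<not> trivial_component (induced G C)"
      using \<open>x \<in> C\<close> \<open>y \<in> C\<close> \<open>x \<noteq> y\<close>
      unfolding trivial_component_def by auto
    moreover have "induced G C \<in> components G"
      using x(2) \<open>x \<in> verts G\<close> unfolding components_def by blast
    ultimately have "induced G C \<in> {H \<in> components G. \<not> trivial_component H}"
      by blast
    then show "C \<in> verts ` {H \<in> components G. \<not> trivial_component H}"
      using image_eqI[of C verts "induced G C"] by simp
  qed
  then show ?thesis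
    using assms(2) finite_subset by blast
qed

definition component_reps :: "'a graph \<Rightarrow> 'a set" where
  "component_reps G = (\<lambda>C. SOME r. r \<in> C) ` nontrivial_components G"

lemma reach_component_reps:
  assumes "graph G" "y \<in> nonisolated G"
  shows "\<exists>r\<in>component_reps G. reach G y r"
proof -
  have "y \<in> component_verts G y"
    using assms(2) nonisolated_subset[OF assms(1)] by (intro component_verts_self) blast
  then have "(SOME r. r \<in> component_verts G y) \<in> component_verts G y"
    by (rule someI)
  moreover have "(SOME r. r \<in> component_verts G y) \<in> component_reps G"
    unfolding component_reps_def
    using component_in_nontrivial_components[OF assms(2)] by (rule rev_image_eqI) simp
  ultimately show ?thesis
    unfolding component_verts_def by blast
qed

lemma component_sets_eq:
  assumes "graph G"
  shows "component_verts G ` verts G = nontrivial_components G \<union> (\<lambda>x. {x}) ` isolated G"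
proof -
  have "verts G = nonisolated G \<union> isolated G"
    using nonisolated_subset[OF assms] unfolding isolated_def by blast
  moreover have "component_verts G ` isolated G = (\<lambda>x. {x}) ` isolated G"
    using component_verts_isolated by (rule image_cong[OF refl])
  moreover have "nontrivial_components G = component_verts G ` nonisolated G"
    unfolding nontrivial_components_def by blast
  ultimately show ?thesis
    by (simp add: image_Un)
qed

lemma component_sets_cover: "\<Union>(component_verts G ` verts G) = verts G"
proof
  show "\<Union>(component_verts G ` verts G) \<subseteq> verts G"
    by (intro UN_least component_verts_subset)
  show "verts G \<subseteq> \<Union>(component_verts G ` verts G)"
  proof
    fix x assume "x \<in> verts G"
    then show "x \<in> \<Union>(component_verts G ` verts G)"
      using component_verts_self[of x G] by blast
  qed
qed

lemma component_sets_disjoint: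
  assumes "graph G"
  shows "pairwise disjnt (component_verts G ` verts G)"
proof (rule pairwiseI)
  fix P Q assume "P \<in> component_verts G ` verts G" "Q \<in> component_verts G ` verts G" "P \<noteq> Q"
  then obtain x y where xy: "P = component_verts G x" "Q = component_verts G y" "P \<noteq> Q"
    by blast
  have "z \<notin> P" if "z \<in> Q" for z
  proof
    assume "z \<in> P"
    then have "P = component_verts G z" "Q = component_verts G z"
      using xy(1,2) that component_verts_eq_of_mem[OF assms, of z x]
        component_verts_eq_of_mem[OF assms, of z y] by simp_all
    then show False
      using xy(3) by simp
  qed
  then show "disjnt P Q"
    unfolding disjnt_def by blast
qed

lemma component_sets_closed:
  assumes "graph G" "adj G x y"
  shows "\<exists>P\<in>component_verts G ` verts G. x \<in> P \<and> y \<in> P"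
proof -
  have "x \<in> verts G"
    using graphD[OF assms] by blast
  then have "x \<in> component_verts G x"
    by (rule component_verts_self)
  moreover have "y \<in> component_verts G x"
    using component_verts_closed[OF assms(1) calculation assms(2)] .
  ultimately show ?thesis
    using \<open>x \<in> verts G\<close> by blast
qed

section \<open>Counting components\<close>

text \<open>The flag \<open>b\<close> restricts the count to nontrivial components.\<close>

definition at_least_components :: "bool \<Rightarrow> nat \<Rightarrow> 'a graph \<Rightarrow> bool" where
  "at_least_components b k H \<longleftrightarrow> (\<exists>X. X \<subseteq> verts H \<and> finite X \<and> card X = k \<and>
     (\<forall>x\<in>X. \<forall>y\<in>X. x \<noteq> y \<longrightarrow> \<not> reach H x y) \<and> (b \<longrightarrow> X \<subseteq> nonisolated H))"

lemma at_least_components_mono: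
  assumes "at_least_components b k H" "j \<le> k"
  shows "at_least_components b j H"
proof -
  obtain X where X: "X \<subseteq> verts H" "finite X" "card X = k"
     "\<forall>x\<in>X. \<forall>y\<in>X. x \<noteq> y \<longrightarrow> \<not> reach H x y" "b \<longrightarrow> X \<subseteq> nonisolated H"
    using assms(1) unfolding at_least_components_def by blast
  obtain Y where "Y \<subseteq> X" "card Y = j" "finite Y"
    using obtain_subset_with_card_n[of j X] assms(2) X(3) by metis
  with X show ?thesis
    unfolding at_least_components_def by (intro exI[of _ Y]) blast
qed

lemma at_least_components_iso:
  assumes "graph H1" "graph H2" "iso H1 H2" "at_least_components b k H1"
  shows "at_least_components b k H2"
proof -
  obtain f where f: "embedding f H1 H2" "f ` verts H1 = verts H2"
    using assms(3) unfolding iso_iff_embedding by blast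
  let ?g = "inv_into (verts H1) f"
  obtain X where X: "X \<subseteq> verts H1" "finite X" "card X = k"
     "\<forall>x\<in>X. \<forall>y\<in>X. x \<noteq> y \<longrightarrow> \<not> reach H1 x y" "b \<longrightarrow> X \<subseteq> nonisolated H1"
    using assms(4) unfolding at_least_components_def by blast
  have inj: "inj_on f (verts H1)"
    using f(1) unfolding embedding_def by blast
  have "\<not> reach H2 (f x) (f y)" if "x \<in> X" "y \<in> X" "x \<noteq> y" for x y
  proof
    assume "reach H2 (f x) (f y)"
    then have "reach H1 (?g (f x)) (?g (f y))"
      using embedding_reach[OF assms(2) embedding_inv_into[OF f]] by blast
    then show False
      using X(1,4) that inv_into_f_f[OF inj] by (metis subsetD)
  qed
  moreover have "card (f ` X) = k"
    using card_image[OF inj_on_subset[OF inj X(1)]] X(3) by simp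
  moreover have "b \<longrightarrow> f ` X \<subseteq> nonisolated H2"
    using X(5) embedding_nonisolated[OF assms(1) f(1)] by blast
  ultimately show ?thesis
    unfolding at_least_components_def using X(1,2) f(2)
    by (intro exI[of _ "f ` X"]) blast
qed

lemma card_unreachable_le:
  assumes "graph H" "\<forall>x\<in>X. \<forall>y\<in>X. x \<noteq> y \<longrightarrow> \<not> reach H x y" "finite R"
    "\<forall>x\<in>X. \<exists>r\<in>R. reach H x r"
  shows "card X \<le> card R"
proof -
  obtain \<rho> where \<rho>: "\<forall>x\<in>X. \<rho> x \<in> R \<and> reach H x (\<rho> x)"
    using assms(4) by metis
  have "inj_on \<rho> X"
  proof (rule inj_onI)
    fix x y assume "x \<in> X" "y \<in> X" "\<rho> x = \<rho> y"
    then have "reach H x y"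
      using \<rho> reach_sym[OF assms(1)] reach_trans by metis
    then show "x = y"
      using assms(2) \<open>x \<in> X\<close> \<open>y \<in> X\<close> by blast
  qed
  then show ?thesis
    using card_inj_on_le[of \<rho> X R] \<rho> assms(3) by blast
qed

definition many_disconnected_siblings :: "'a graph \<Rightarrow> bool" where
  "many_disconnected_siblings G \<longleftrightarrow> (\<exists>S :: 'a graph set. infinite S \<and>
     (\<forall>G' \<in> S. sibling G' G \<and> disconnected G') \<and>
     (\<forall>G1 \<in> S. \<forall>G2 \<in> S. G1 \<noteq> G2 \<longrightarrow> \<not> iso G1 G2))"

text \<open>Siblings whose numbers of components lie in the disjoint windows
  \<open>[(k + 1) c, (k + 2) c)\<close> are pairwise non-isomorphic.\<close>

lemma many_disconnected_siblingsI:
  assumes "graph G" "c \<ge> 1"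
    and windows: "\<And>m. m \<ge> 1 \<Longrightarrow> \<exists>W \<subseteq> verts G. embeds G (induced G W) \<and>
       disconnected (induced G W) \<and> at_least_components b m (induced G W) \<and>
       \<not> at_least_components b (m + c) (induced G W)"
  shows "many_disconnected_siblings G"
proof -
  have "\<exists>W \<subseteq> verts G. embeds G (induced G W) \<and> disconnected (induced G W) \<and>
      at_least_components b (Suc k * c) (induced G W) \<and>
      \<not> at_least_components b (Suc k * c + c) (induced G W)" for k
    using assms(2) by (intro windows) simp
  then obtain W where W: "\<And>k. W k \<subseteq> verts G \<and> embeds G (induced G (W k)) \<and>
       disconnected (induced G (W k)) \<and> at_least_components b (Suc k * c) (induced G (W k)) \<and>
       \<not> at_least_components b (Suc k * c + c) (induced G (W k))"
    by metis
  define H where "H k = induced G (W k)" for k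
  have graph_H: "graph (H k)" for k
    unfolding H_def using graph_induced[OF assms(1)] .
  have not_iso: "\<not> iso (H l) (H k)" if "k < l" for k l
  proof
    assume "iso (H l) (H k)"
    then have "at_least_components b (Suc l * c) (H k)"
      using at_least_components_iso[OF graph_H graph_H] W unfolding H_def by blast
    moreover have "Suc k * c + c \<le> Suc l * c"
      using that mult_le_mono1[of "Suc (Suc k)" "Suc l" c] by simp
    ultimately show False
      using at_least_components_mono W unfolding H_def by blast
  qed
  have distinct: "\<not> iso (H k) (H l)" if "k \<noteq> l" for k l
    using that not_iso[of k l] not_iso[of l k] iso_sym by (metis linorder_neq_iff)
  then have "inj H"
    using iso_refl by (metis injI)
  moreover have "sibling (H k) G \<and> disconnected (H k)" for k
    using W[of k] graph_H[of k] embeds_induced[of "W k" G]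
    unfolding H_def sibling_def equimorphic_def by blast
  ultimately show ?thesis
    unfolding many_disconnected_siblings_def using distinct
    by (intro exI[of _ "range H"]) (metis finite_imageD infinite_UNIV_nat rangeE)
qed

section \<open>Towers of siblings\<close>

text \<open>The induced subgraph \<open>tower m\<close> consists of the copy \<open>e\<^sup>m G\<close> of \<open>G\<close>
  together with the \<open>m\<close> pairwise separated copies \<open>e\<^sup>j Z\<close>, \<open>j < m\<close>; it is therefore a
  sibling of \<open>G\<close> with between \<open>m\<close> and \<open>m + card R\<close> components.\<close>

locale sibling_tower =
  fixes G :: "'a graph" and e :: "'a \<Rightarrow> 'a" and Z :: "'a set" and z0 :: 'a
    and b :: bool and R :: "'a set"
  assumes graph: "graph G" and embedding: "embedding e G G"
    and Z_subset: "Z \<subseteq> verts G" and z0_in_Z: "z0 \<in> Z"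
    and Z_disjoint: "Z \<inter> e ` verts G = {}"
    and Z_detached: "\<forall>z\<in>Z. \<forall>w\<in>e ` verts G. \<not> adj G z w"
    and Z_connected: "\<forall>z\<in>Z. reach (induced G Z) z0 z"
    and z0_nonisolated: "b \<longrightarrow> z0 \<in> nonisolated (induced G Z)"
    and finite_R: "finite R"
    and R_reps: "\<forall>y\<in>verts G. (b \<longrightarrow> y \<in> nonisolated G) \<longrightarrow> (\<exists>r\<in>R. reach G y r)"
begin

definition tower :: "nat \<Rightarrow> 'a set" where
  "tower m = (e ^^ m) ` verts G \<union> (\<Union>j<m. (e ^^ j) ` Z)"

lemma funpow_embedding: "embedding (e ^^ n) G G"
  using embedding_funpow[OF embedding] .

lemma funpow_image_subset: "(e ^^ n) ` verts G \<subseteq> verts G"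
  using funpow_embedding unfolding embedding_def by blast

lemma funpow_inj: "inj_on (e ^^ n) (verts G)"
  using funpow_embedding unfolding embedding_def by blast

lemma funpow_adj_iff:
  "x \<in> verts G \<Longrightarrow> y \<in> verts G \<Longrightarrow> adj G ((e ^^ n) x) ((e ^^ n) y) \<longleftrightarrow> adj G x y"
  using funpow_embedding unfolding embedding_def by blast

lemma funpow_image_antimono:
  assumes "j \<le> k"
  shows "(e ^^ k) ` verts G \<subseteq> (e ^^ j) ` verts G"
proof -
  have "(e ^^ k) ` verts G = (e ^^ j) ` (e ^^ (k - j)) ` verts G"
    using assms by (metis funpow_add image_comp le_add_diff_inverse)
  also have "\<dots> \<subseteq> (e ^^ j) ` verts G"
    using funpow_image_subset by (rule image_mono)
  finally show ?thesis .
qed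

lemma layer_detached:
  assumes "z \<in> Z" "w \<in> (e ^^ Suc j) ` verts G"
  shows "(e ^^ j) z \<noteq> w" "\<not> adj G ((e ^^ j) z) w"
proof -
  obtain y where y: "y \<in> verts G" "w = (e ^^ j) (e y)"
    using assms(2) by (auto simp del: funpow.simps simp add: funpow_Suc_right)
  have vs: "e y \<in> verts G" "z \<in> verts G"
    using embedding y(1) Z_subset assms(1) unfolding embedding_def by blast+
  have "z \<noteq> e y" "\<not> adj G z (e y)"
    using Z_disjoint Z_detached assms(1) y(1) by blast+
  then show "(e ^^ j) z \<noteq> w" "\<not> adj G ((e ^^ j) z) w"
    by (simp_all add: y(2) vs inj_on_eq_iff[OF funpow_inj] funpow_adj_iff)
qed

lemma layer_in_image_funpow: "(e ^^ j) ` Z \<subseteq> (e ^^ j) ` verts G"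
  using Z_subset by (rule image_mono)

lemma tower_subset: "tower m \<subseteq> verts G"
  unfolding tower_def using funpow_image_subset Z_subset by blast

lemma layer_subset_tower: "j < m \<Longrightarrow> (e ^^ j) ` Z \<subseteq> tower m"
  unfolding tower_def by blast

lemma graph_tower: "graph (induced G (tower m))"
  using graph_induced[OF graph] .

lemma embedding_tower: "embedding (e ^^ m) G (induced G (tower m))"
  by (rule embedding_into_induced[OF funpow_embedding]) (auto simp: tower_def)

lemma adj_layer_closed:
  assumes "j < m" "a \<in> (e ^^ j) ` Z" "adj G a c" "c \<in> tower m"
  shows "c \<in> (e ^^ j) ` Z"
proof -
  obtain z where z: "z \<in> Z" "a = (e ^^ j) z"
    using assms(2) by blast
  have not_above: "c \<notin> (e ^^ Suc j) ` verts G"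
    using layer_detached(2)[OF z(1)] z(2) assms(3) by blast
  consider (top) "c \<in> (e ^^ m) ` verts G" | (layer) i where "i < m" "c \<in> (e ^^ i) ` Z"
    using assms(4) unfolding tower_def by blast
  then show ?thesis
  proof cases
    case top
    then show ?thesis
      using not_above funpow_image_antimono[OF Suc_leI[OF assms(1)]] by blast
  next
    case layer
    consider (eq) "i = j" | (above) "j < i" | (below) "i < j"
      by linarith
    then show ?thesis
    proof cases
      case eq
      then show ?thesis using layer by simp
    next
      case above
      then have "c \<in> (e ^^ Suc j) ` verts G"
        using funpow_image_antimono[OF Suc_leI[OF above]] layer(2) layer_in_image_funpow by blast
      then show ?thesis
        using not_above by contradiction
    next
      case below
      obtain z' where z': "z' \<in> Z" "c = (e ^^ i) z'"
        using layer(2) by blast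
      have "a \<in> (e ^^ Suc i) ` verts G"
        using funpow_image_antimono[OF Suc_leI[OF below]] assms(2) layer_in_image_funpow by blast
      then have "\<not> adj G c a"
        using layer_detached(2)[OF z'(1)] z'(2) by blast
      then show ?thesis
        using graphD[OF graph assms(3)] by blast
    qed
  qed
qed

lemma funpow_z0_notin_layer:
  assumes "k \<noteq> j"
  shows "(e ^^ k) z0 \<notin> (e ^^ j) ` Z"
proof
  assume "(e ^^ k) z0 \<in> (e ^^ j) ` Z"
  then obtain z where z: "z \<in> Z" "(e ^^ k) z0 = (e ^^ j) z"
    by blast
  consider "j < k" | "k < j"
    using assms by linarith
  then show False
  proof cases
    case 1
    have "(e ^^ k) z0 \<in> (e ^^ Suc j) ` verts G"
      using funpow_image_antimono[OF Suc_leI[OF 1]] z0_in_Z Z_subset by blast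
    from layer_detached(1)[OF z(1) this] show False
      using z(2) by simp
  next
    case 2
    have "(e ^^ j) z \<in> (e ^^ Suc k) ` verts G"
      using funpow_image_antimono[OF Suc_leI[OF 2]] z(1) Z_subset by blast
    from layer_detached(1)[OF z0_in_Z this] show False
      using z(2) by simp
  qed
qed

lemma reach_within_layer:
  assumes "j < m" "reach (induced G (tower m)) ((e ^^ j) z0) c"
  shows "c \<in> (e ^^ j) ` Z"
proof (rule reach_closed[OF assms(2)])
  show "(e ^^ j) z0 \<in> (e ^^ j) ` Z"
    using z0_in_Z by blast
next
  fix a c
  assume "a \<in> (e ^^ j) ` Z" "adj (induced G (tower m)) a c"
  then show "c \<in> (e ^^ j) ` Z"
    using adj_layer_closed[OF assms(1)] by simp
qed

lemma at_least_components_tower: "at_least_components b m (induced G (tower m))"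
proof -
  let ?X = "(\<lambda>j. (e ^^ j) z0) ` {..<m}"
  have unreachable: "\<not> reach (induced G (tower m)) ((e ^^ j) z0) ((e ^^ k) z0)"
    if "j < m" "k \<noteq> j" for j k
    using reach_within_layer[OF that(1)] funpow_z0_notin_layer[OF that(2)] by blast
  have "inj_on (\<lambda>j. (e ^^ j) z0) {..<m}"
  proof (rule inj_onI, rule ccontr)
    fix j k assume "j \<in> {..<m}" "(e ^^ j) z0 = (e ^^ k) z0" "j \<noteq> k"
    then show False
      using unreachable[of j k] by simp
  qed
  then have card: "card ?X = m"
    by (simp add: card_image)
  have subset: "?X \<subseteq> verts (induced G (tower m))"
    using layer_subset_tower z0_in_Z by auto
  have nonisolated: "?X \<subseteq> nonisolated (induced G (tower m))" if b
  proof
    fix x assume "x \<in> ?X"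
    then obtain j where j: "j < m" "x = (e ^^ j) z0"
      by blast
    obtain z where "adj G z0 z" "z \<in> Z"
      using z0_nonisolated \<open>b\<close> unfolding nonisolated_def by auto
    moreover have "z0 \<in> verts G" "z \<in> verts G"
      using z0_in_Z \<open>z \<in> Z\<close> Z_subset by blast+
    ultimately have "adj G x ((e ^^ j) z)"
      using funpow_adj_iff j(2) by simp
    moreover have "x \<in> tower m" "(e ^^ j) z \<in> tower m"
      using layer_subset_tower[OF j(1)] j(2) z0_in_Z \<open>z \<in> Z\<close> by blast+
    ultimately show "x \<in> nonisolated (induced G (tower m))"
      unfolding nonisolated_def adj_induced by blast
  qed
  have "\<not> reach (induced G (tower m)) x y"
    if xy: "x \<in> ?X" "y \<in> ?X" "x \<noteq> y" for x y
  proof -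
    obtain j k where "j < m" "x = (e ^^ j) z0" "y = (e ^^ k) z0"
      using xy(1,2) by blast
    then show ?thesis
      using unreachable[of j k] xy(3) by blast
  qed
  then show ?thesis
    unfolding at_least_components_def
    using card subset nonisolated by (intro exI[of _ ?X]) simp
qed

lemma nonisolated_of_top:
  assumes y: "y \<in> verts G" and x: "(e ^^ m) y \<in> nonisolated (induced G (tower m))"
  shows "y \<in> nonisolated G"
proof -
  obtain w where w: "adj G ((e ^^ m) y) w" "w \<in> tower m"
    using x unfolding nonisolated_def by auto
  have "w \<notin> (e ^^ j) ` Z" if "j < m" for j
  proof
    assume "w \<in> (e ^^ j) ` Z"
    then obtain z where z: "z \<in> Z" "w = (e ^^ j) z"
      by blast
    have "(e ^^ m) y \<in> (e ^^ Suc j) ` verts G"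
      using funpow_image_antimono[OF Suc_leI[OF that]] y by blast
    from layer_detached(2)[OF z(1) this] show False
      using graphD[OF graph w(1)] z(2) by simp
  qed
  then obtain y' where "y' \<in> verts G" "w = (e ^^ m) y'"
    using w(2) unfolding tower_def by blast
  then have "adj G y y'"
    using funpow_adj_iff y w(1) by simp
  then show ?thesis
    unfolding nonisolated_def by blast
qed

lemma tower_reach_reps:
  assumes x: "x \<in> tower m" and b: "b \<longrightarrow> x \<in> nonisolated (induced G (tower m))"
  shows "\<exists>r \<in> (e ^^ m) ` R \<union> (\<lambda>j. (e ^^ j) z0) ` {..<m}. reach (induced G (tower m)) x r"
proof -
  consider (top) y where "y \<in> verts G" "x = (e ^^ m) y"
    | (layer) j z where "j < m" "z \<in> Z" "x = (e ^^ j) z"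
    using x unfolding tower_def by blast
  then show ?thesis
  proof cases
    case top
    have "y \<in> nonisolated G" if b
      using nonisolated_of_top top b \<open>b\<close> by blast
    then obtain r where r: "r \<in> R" "reach G y r"
      using R_reps top(1) by blast
    have "reach (induced G (tower m)) x ((e ^^ m) r)"
      using embedding_reach[OF graph embedding_tower r(2)] top(2) by simp
    then show ?thesis
      using r(1) by blast
  next
    case layer
    have "reach (induced G Z) z z0"
      using reach_sym[OF graph_induced[OF graph]] Z_connected layer(2) by blast
    moreover have "embedding (e ^^ j) (induced G Z) (induced G (tower m))"
      using embedding_induced[OF funpow_embedding Z_subset layer_subset_tower[OF layer(1)]] .
    ultimately have "reach (induced G (tower m)) x ((e ^^ j) z0)"
      using embedding_reach[OF graph_induced[OF graph]] layer(3) by simp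
    then show ?thesis
      using layer(1) by blast
  qed
qed

lemma not_at_least_components_tower:
  "\<not> at_least_components b (m + (card R + 1)) (induced G (tower m))"
proof
  assume "at_least_components b (m + (card R + 1)) (induced G (tower m))"
  then obtain X where X: "X \<subseteq> tower m" "card X = m + (card R + 1)"
    "\<forall>x\<in>X. \<forall>y\<in>X. x \<noteq> y \<longrightarrow> \<not> reach (induced G (tower m)) x y"
    "b \<longrightarrow> X \<subseteq> nonisolated (induced G (tower m))"
    unfolding at_least_components_def by auto
  let ?R = "(e ^^ m) ` R \<union> (\<lambda>j. (e ^^ j) z0) ` {..<m}"
  have "\<forall>x\<in>X. \<exists>r\<in>?R. reach (induced G (tower m)) x r"
    using tower_reach_reps X(1,4) by blast
  then have "card X \<le> card ?R"
    using card_unreachable_le[OF graph_tower X(3)] finite_R by simp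
  also have "\<dots> \<le> card R + m"
    using card_Un_le[of "(e ^^ m) ` R" "(\<lambda>j. (e ^^ j) z0) ` {..<m}"]
      card_image_le[OF finite_R, of "e ^^ m"] card_image_le[of "{..<m}" "\<lambda>j. (e ^^ j) z0"]
    by simp
  finally show False
    using X(2) by simp
qed

lemma disconnected_tower:
  assumes "m \<ge> 1"
  shows "disconnected (induced G (tower m))"
proof -
  have "z0 \<in> tower m"
    using layer_subset_tower[of 0 m] assms z0_in_Z by auto
  moreover have "(e ^^ m) z0 \<in> tower m"
    using z0_in_Z Z_subset unfolding tower_def by blast
  moreover have "\<not> reach (induced G (tower m)) z0 ((e ^^ m) z0)"
    using reach_within_layer[of 0 m] funpow_z0_notin_layer[of m 0] assms by auto
  ultimately show ?thesis
    unfolding disconnected_def connected_graph_def by auto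
qed

lemma many_siblings: "many_disconnected_siblings G"
proof (rule many_disconnected_siblingsI[OF graph])
  fix m :: nat
  assume "m \<ge> 1"
  have "embeds G (induced G (tower m))"
    using embedding_tower unfolding embeds_iff_embedding by blast
  then show "\<exists>W \<subseteq> verts G. embeds G (induced G W) \<and> disconnected (induced G W) \<and>
      at_least_components b m (induced G W) \<and>
      \<not> at_least_components b (m + (card R + 1)) (induced G W)"
    using tower_subset disconnected_tower[OF \<open>m \<ge> 1\<close>]
      at_least_components_tower not_at_least_components_tower
    by (intro exI[of _ "tower m"]) simp
qed simp

end

lemma many_siblings_of_detached_edge:
  assumes "graph G" "finite (nontrivial_components G)" "embedding e G G"
    and "adj G u v" "u \<notin> e ` verts G" "v \<notin> e ` verts G"
    and "\<forall>w\<in>e ` verts G. \<not> adj G u w \<and> \<not> adj G v w"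
  shows "many_disconnected_siblings G"
proof -
  interpret sibling_tower G e "{u, v}" u True "component_reps G"
  proof
    show "{u, v} \<subseteq> verts G"
      using graphD[OF assms(1,4)] by blast
    have "reach (induced G {u, v}) u v"
      using assms(4) by (intro reach_adj) simp
    then show "\<forall>z\<in>{u, v}. reach (induced G {u, v}) u z"
      by simp
    show "True \<longrightarrow> u \<in> nonisolated (induced G {u, v})"
      using assms(4) unfolding nonisolated_def by (intro impI CollectI exI[of _ v]) simp
    show "finite (component_reps G)"
      using assms(2) unfolding component_reps_def by simp
    show "\<forall>y\<in>verts G. (True \<longrightarrow> y \<in> nonisolated G) \<longrightarrow> (\<exists>r\<in>component_reps G. reach G y r)"
      using reach_component_reps[OF assms(1)] by blast
    show "{u, v} \<inter> e ` verts G = {}"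
      using assms(5,6) by blast
    show "\<forall>z\<in>{u, v}. \<forall>w\<in>e ` verts G. \<not> adj G z w"
      using assms(7) by blast
  qed (simp_all add: assms(1,3))
  show ?thesis
    by (rule many_siblings)
qed

lemma many_siblings_of_detached_vertex:
  assumes "graph G" "finite (nontrivial_components G)" "finite (isolated G)"
    and "embedding e G G" "a \<in> verts G" "a \<notin> e ` verts G"
    and "\<forall>w\<in>e ` verts G. \<not> adj G a w"
  shows "many_disconnected_siblings G"
proof -
  interpret sibling_tower G e "{a}" a False "component_reps G \<union> isolated G"
  proof
    show "\<forall>y\<in>verts G. (False \<longrightarrow> y \<in> nonisolated G) \<longrightarrow>
        (\<exists>r\<in>component_reps G \<union> isolated G. reach G y r)"
    proof (intro ballI impI)
      fix y assume "y \<in> verts G"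
      show "\<exists>r\<in>component_reps G \<union> isolated G. reach G y r"
      proof (cases "y \<in> nonisolated G")
        case True
        then show ?thesis
          using reach_component_reps[OF assms(1)] by blast
      next
        case False
        then have "y \<in> isolated G"
          using \<open>y \<in> verts G\<close> unfolding isolated_def by blast
        then show ?thesis
          by (intro bexI[of _ y]) simp_all
      qed
    qed
    show "finite (component_reps G \<union> isolated G)"
      using assms(2,3) unfolding component_reps_def by simp
    show "{a} \<inter> e ` verts G = {}"
      using assms(6) by blast
    show "\<forall>z\<in>{a}. \<forall>w\<in>e ` verts G. \<not> adj G z w"
      using assms(7) by blast
  qed (simp_all add: assms(1,4,5))
  show ?thesis
    by (rule many_siblings)
qed

section \<open>Self-embeddings that free part of the graph\<close>

lemma inj_on_if:
  assumes "inj_on h A" "inj_on k B" "h ` A \<inter> k ` B = {}" "A \<inter> B = {}"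
  shows "inj_on (\<lambda>x. if x \<in> A then h x else k x) (A \<union> B)"
proof -
  let ?f = "\<lambda>x. if x \<in> A then h x else k x"
  have AB: "A - B = A" "B - A = B"
    using assms(4) by blast+
  have "?f ` A = h ` A" "?f ` B = k ` B"
    using assms(4) by (auto intro!: image_cong)
  moreover have "inj_on ?f A"
    using assms(1) by (simp add: inj_on_def)
  moreover have "inj_on ?f B \<longleftrightarrow> inj_on k B"
    using assms(4) by (intro inj_on_cong) auto
  ultimately show ?thesis
    unfolding inj_on_Un AB using assms(2,3) by simp
qed

lemma embedding_piecewise:
  assumes gr: "graph G" and h: "embedding h G G"
    and k: "inj_on k (isolated G)" "k ` isolated G \<subseteq> verts G"
    and disjoint: "h ` nonisolated G \<inter> k ` isolated G = {}"
    and detached: "\<forall>x\<in>verts G. \<forall>y\<in>isolated G.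
      \<not> adj G (if x \<in> nonisolated G then h x else k x) (k y)"
  shows "embedding (\<lambda>x. if x \<in> nonisolated G then h x else k x) G G"
proof -
  let ?e = "\<lambda>x. if x \<in> nonisolated G then h x else k x"
  have N_verts: "nonisolated G \<subseteq> verts G"
    using nonisolated_subset[OF gr] .
  have h_inj: "inj_on h (nonisolated G)"
    using h N_verts unfolding embedding_def by (meson inj_on_subset)
  have "verts G = nonisolated G \<union> isolated G" "nonisolated G \<inter> isolated G = {}"
    using N_verts unfolding isolated_def by blast+
  then have "inj_on ?e (verts G)"
    using inj_on_if[OF h_inj k(1) disjoint] by simp
  moreover have "?e ` verts G \<subseteq> verts G"
    using h k(2) unfolding embedding_def isolated_def by auto
  moreover have "adj G x y \<longleftrightarrow> adj G (?e x) (?e y)" if xy: "x \<in> verts G" "y \<in> verts G" for x y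
  proof (cases "x \<in> nonisolated G \<and> y \<in> nonisolated G")
    case True
    then show ?thesis
      using h xy unfolding embedding_def by simp
  next
    case False
    then have "\<not> adj G x y"
      using isolated_not_adj[OF gr] by blast
    moreover have "\<not> adj G (?e x) (?e y)"
    proof (cases "y \<in> nonisolated G")
      case True
      then have "x \<in> isolated G"
        using False xy(1) unfolding isolated_def by blast
      then have "\<not> adj G (?e y) (k x)"
        using detached xy(2) by blast
      then show ?thesis
        using graphD[OF gr, of "?e x" "?e y"] \<open>x \<in> isolated G\<close> unfolding isolated_def by auto
    next
      case False
      then show ?thesis
        using detached xy unfolding isolated_def by simp
    qed
    ultimately show ?thesis
      by blast
  qed
  ultimately show ?thesis
    unfolding embedding_def by blast
qed

lemma embedding_on_nonisolated:
  assumes "graph G" "embedding h G G"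
  shows "embedding (\<lambda>x. if x \<in> nonisolated G then h x else x) G G"
proof -
  have "h ` nonisolated G \<subseteq> nonisolated G"
    using embedding_nonisolated[OF assms] by blast
  then have "h ` nonisolated G \<inter> id ` isolated G = {}"
    unfolding isolated_def by auto
  moreover have "\<forall>x\<in>verts G. \<forall>y\<in>isolated G.
      \<not> adj G (if x \<in> nonisolated G then h x else id x) (id y)"
    using isolated_not_adj(2)[OF assms(1)] unfolding isolated_def by simp
  ultimately have "embedding (\<lambda>x. if x \<in> nonisolated G then h x else id x) G G"
    using assms by (intro embedding_piecewise) (auto simp: isolated_def)
  then show ?thesis
    unfolding id_def .
qed

lemma detached_of_unreached:
  assumes gr: "graph G" and gr': "graph G'" and f: "embedding f G G'" and g: "embedding g G' G"
    and c: "c \<in> nonisolated G'" and unreached: "\<forall>x\<in>nonisolated G. \<not> reach G' (f x) c"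
  defines "e \<equiv> \<lambda>x. if x \<in> nonisolated G then g (f x) else x"
  shows "g c \<notin> e ` verts G" "\<forall>w\<in>e ` verts G. \<not> adj G (g c) w"
proof -
  have c_verts: "c \<in> verts G'"
    using c nonisolated_subset[OF gr'] by blast
  have f_verts: "f x \<in> verts G'" if "x \<in> verts G" for x
    using f that unfolding embedding_def by blast
  have not_f: "g c \<noteq> g (f x)" "\<not> adj G (g c) (g (f x))"
    if "x \<in> nonisolated G" "x \<in> verts G" for x
  proof -
    have "\<not> reach G' (f x) c"
      using unreached that(1) by blast
    then have "c \<noteq> f x" "\<not> adj G' c (f x)"
      using reach_adj[of G' "f x" c] graphD[OF gr', of c "f x"] by auto
    then show "g c \<noteq> g (f x)" "\<not> adj G (g c) (g (f x))"
      using g c_verts f_verts[OF that(2)] unfolding embedding_def by (auto simp: inj_on_eq_iff)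
  qed
  have gc: "g c \<in> nonisolated G"
    using embedding_nonisolated[OF gr' g c] .
  show "g c \<notin> e ` verts G"
  proof
    assume "g c \<in> e ` verts G"
    then obtain x where x: "x \<in> verts G" "g c = e x"
      by blast
    then show False
      using not_f(1)[OF _ x(1)] gc unfolding e_def by (cases "x \<in> nonisolated G") simp_all
  qed
  show "\<forall>w\<in>e ` verts G. \<not> adj G (g c) w"
  proof
    fix w assume "w \<in> e ` verts G"
    then obtain x where x: "x \<in> verts G" "w = e x"
      by blast
    then show "\<not> adj G (g c) w"
      using not_f(2)[OF _ x(1)] isolated_not_adj(2)[OF gr, of x] unfolding e_def
      by (cases "x \<in> nonisolated G") simp_all
  qed
qed

text \<open>If \<open>f\<close> misses a nontrivial component of \<open>G'\<close>, then \<open>g\<close> maps an edge of that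
  component to an edge of \<open>G\<close> detached from the image of \<open>g \<circ> f\<close> on the non-isolated
  vertices.\<close>

lemma many_siblings_of_missed_component:
  assumes gr: "graph G" and gr': "graph G'" and fin: "finite (nontrivial_components G)"
    and f: "embedding f G G'" and g: "embedding g G' G" and d: "d \<in> nonisolated G'"
    and missed: "\<forall>x\<in>nonisolated G. \<not> reach G' (f x) d"
  shows "many_disconnected_siblings G"
proof -
  let ?e = "\<lambda>x. if x \<in> nonisolated G then g (f x) else x"
  have e: "embedding ?e G G"
    using embedding_on_nonisolated[OF gr embedding_comp[OF f g]] by (simp only: comp_apply)
  obtain d' where dd': "adj G' d d'"
    using d unfolding nonisolated_def by blast
  have "adj G' d' d"
    using graphD[OF gr' dd'] by blast
  then have "\<forall>x\<in>nonisolated G. \<not> reach G' (f x) d'"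
    using missed reach_step[of G' _ d' d] by blast
  with adj_nonisolated(2)[OF gr' dd']
  have d': "g d' \<notin> ?e ` verts G" "\<forall>w\<in>?e ` verts G. \<not> adj G (g d') w"
    by (rule detached_of_unreached[OF gr gr' f g])+
  have d: "g d \<notin> ?e ` verts G" "\<forall>w\<in>?e ` verts G. \<not> adj G (g d) w"
    by (rule detached_of_unreached[OF gr gr' f g d missed])+
  have "adj G (g d) (g d')"
    using g graphD[OF gr' dd'] dd' unfolding embedding_def by blast
  from many_siblings_of_detached_edge[OF gr fin e this d(1) d'(1)] show ?thesis
    using d(2) d'(2) by blast
qed

lemma at_least_components_add_isolated:
  assumes "graph G" "M \<subseteq> isolated G" "finite M"
  shows "at_least_components False (card M) (induced G (nonisolated G \<union> M))"
proof -
  have "\<not> reach (induced G (nonisolated G \<union> M)) x y" if "x \<in> M" "x \<noteq> y" for x y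
    using reach_from_isolated[OF isolated_in_induced[OF assms(1)]] assms(2) that by blast
  then show ?thesis
    unfolding at_least_components_def using assms(3) by (intro exI[of _ M]) auto
qed

lemma not_at_least_components_add_isolated:
  assumes "graph G" "finite (nontrivial_components G)" "M \<subseteq> isolated G" "finite M"
  shows "\<not> at_least_components False (card M + (card (component_reps G) + 1))
           (induced G (nonisolated G \<union> M))"
proof
  let ?W = "nonisolated G \<union> M"
  assume "at_least_components False (card M + (card (component_reps G) + 1)) (induced G ?W)"
  then obtain X where X: "X \<subseteq> ?W" "card X = card M + (card (component_reps G) + 1)"
    "\<forall>x\<in>X. \<forall>y\<in>X. x \<noteq> y \<longrightarrow> \<not> reach (induced G ?W) x y"
    unfolding at_least_components_def by auto
  have reps: "\<exists>r\<in>component_reps G \<union> M. reach (induced G ?W) x r" if "x \<in> ?W" for x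
  proof (cases "x \<in> nonisolated G")
    case True
    obtain r where r: "r \<in> component_reps G" "reach G x r"
      using reach_component_reps[OF assms(1) True] by blast
    have "reach (induced G ?W) x r"
    proof (rule reach_induced_closed[OF r(2) that])
      fix a b assume "adj G a b"
      then show "b \<in> ?W"
        using adj_nonisolated(2)[OF assms(1)] by blast
    qed
    then show ?thesis
      using r(1) by blast
  next
    case False
    then have "x \<in> M"
      using that by blast
    then show ?thesis
      by (intro bexI[of _ x]) simp_all
  qed
  have "finite (component_reps G \<union> M)"
    using assms(2,4) unfolding component_reps_def by simp
  moreover have "\<forall>x\<in>X. \<exists>r\<in>component_reps G \<union> M. reach (induced G ?W) x r"
    using reps X(1) by blast
  ultimately have "card X \<le> card (component_reps G \<union> M)"
    by (rule card_unreachable_le[OF graph_induced[OF assms(1)] X(3)])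
  also have "\<dots> \<le> card (component_reps G) + card M"
    by (rule card_Un_le)
  finally show False
    using X(2) by simp
qed

lemma disconnected_add_isolated:
  assumes "graph G" "x \<in> M" "M \<subseteq> isolated G" "y \<in> nonisolated G"
  shows "disconnected (induced G (nonisolated G \<union> M))"
proof -
  have "x \<noteq> y"
    using assms(2-4) unfolding isolated_def by blast
  then have "\<not> reach (induced G (nonisolated G \<union> M)) x y"
    using reach_from_isolated[OF isolated_in_induced[OF assms(1)]] assms(2,3) by blast
  then show ?thesis
    using assms(2,4) unfolding disconnected_def connected_graph_def by auto
qed

text \<open>Adding \<open>m\<close> isolated vertices to the non-isolated part gives a sibling whose number
  of components is \<open>m\<close> plus the number of nontrivial components.\<close>

lemma many_siblings_of_embedding_into_nonisolated:
  assumes "graph G" "finite (nontrivial_components G)" "infinite (isolated G)"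
    and "embedding e G G" "e ` verts G \<subseteq> nonisolated G"
  shows "many_disconnected_siblings G"
proof (rule many_disconnected_siblingsI[OF assms(1)])
  fix m :: nat
  assume "m \<ge> 1"
  obtain M where M: "M \<subseteq> isolated G" "finite M" "card M = m"
    using infinite_arbitrarily_large[OF assms(3)] by blast
  have "M \<noteq> {}"
    using M(3) \<open>m \<ge> 1\<close> by auto
  then obtain x where "x \<in> M"
    by blast
  have "e x \<in> nonisolated G"
    using assms(5) M(1) \<open>x \<in> M\<close> unfolding isolated_def by blast
  have "embeds G (induced G (nonisolated G \<union> M))"
    using embedding_into_induced[OF assms(4)] assms(5) unfolding embeds_iff_embedding by blast
  moreover have "nonisolated G \<union> M \<subseteq> verts G"
    using nonisolated_subset[OF assms(1)] M(1) unfolding isolated_def by blast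
  ultimately show "\<exists>W \<subseteq> verts G. embeds G (induced G W) \<and> disconnected (induced G W) \<and>
      at_least_components False m (induced G W) \<and>
      \<not> at_least_components False (m + (card (component_reps G) + 1)) (induced G W)"
    using at_least_components_add_isolated[OF assms(1) M(1,2)]
      not_at_least_components_add_isolated[OF assms(1,2) M(1,2)]
      disconnected_add_isolated[OF assms(1) \<open>x \<in> M\<close> M(1) \<open>e x \<in> nonisolated G\<close>]
    unfolding M(3) by (intro exI[of _ "nonisolated G \<union> M"] conjI)
qed simp

text \<open>A set \<open>A\<close> of non-isolated vertices is absorbable if some self-embedding moves the
  non-isolated part of \<open>G\<close> off \<open>A\<close>, leaving \<open>A\<close> independent and detached from the image;
  isolated vertices can then be re-embedded into \<open>A\<close>.\<close>

definition absorbable :: "'a graph \<Rightarrow> 'a set \<Rightarrow> bool" where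
  "absorbable G A \<longleftrightarrow> A \<subseteq> nonisolated G \<and> (\<exists>h. embedding h G G \<and>
     A \<inter> h ` nonisolated G = {} \<and> (\<forall>a\<in>A. \<forall>w\<in>h ` nonisolated G \<union> A. \<not> adj G a w))"

lemma many_siblings_of_absorbable:
  assumes gr: "graph G" and "finite (nontrivial_components G)" "finite (isolated G)"
    and "absorbable G A" "a \<in> A"
  shows "many_disconnected_siblings G"
proof -
  obtain h where h: "embedding h G G" "A \<inter> h ` nonisolated G = {}"
    "\<forall>a\<in>A. \<forall>w\<in>h ` nonisolated G \<union> A. \<not> adj G a w"
    using assms(4) unfolding absorbable_def by blast
  have a: "a \<in> nonisolated G"
    using assms(4,5) unfolding absorbable_def by blast
  let ?e = "\<lambda>x. if x \<in> nonisolated G then h x else x"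
  have "a \<notin> ?e ` verts G"
    using a h(2) assms(5) by auto
  moreover have "\<not> adj G a (?e x)" if "x \<in> verts G" for x
  proof (cases "x \<in> nonisolated G")
    case True
    then show ?thesis
      using h(3) assms(5) by simp
  next
    case False
    then show ?thesis
      using isolated_not_adj(2)[OF gr False] by simp
  qed
  ultimately show ?thesis
    using many_siblings_of_detached_vertex[OF assms(1-3) embedding_on_nonisolated[OF gr h(1)]]
      nonisolated_subset[OF gr] a by blast
qed

lemma many_siblings_of_large_absorbable:
  assumes gr: "graph G" and "finite (nontrivial_components G)" "infinite (isolated G)"
    and "absorbable G A" and \<iota>: "inj_on \<iota> (isolated G)" "\<iota> ` isolated G \<subseteq> A"
  shows "many_disconnected_siblings G"
proof -
  obtain h where h: "embedding h G G" "A \<inter> h ` nonisolated G = {}"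
    "\<forall>a\<in>A. \<forall>w\<in>h ` nonisolated G \<union> A. \<not> adj G a w"
    using assms(4) unfolding absorbable_def by blast
  have A: "A \<subseteq> nonisolated G"
    using assms(4) unfolding absorbable_def by blast
  let ?e = "\<lambda>x. if x \<in> nonisolated G then h x else \<iota> x"
  have "embedding ?e G G"
  proof (rule embedding_piecewise[OF gr h(1) \<iota>(1)])
    show "\<iota> ` isolated G \<subseteq> verts G"
      using \<iota>(2) A nonisolated_subset[OF gr] by blast
    show "h ` nonisolated G \<inter> \<iota> ` isolated G = {}"
      using \<iota>(2) h(2) by blast
    show "\<forall>x\<in>verts G. \<forall>y\<in>isolated G. \<not> adj G (?e x) (\<iota> y)"
    proof (intro ballI)
      fix x y assume "x \<in> verts G" "y \<in> isolated G"
      have "?e x \<in> h ` nonisolated G \<union> A"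
        using \<iota>(2) \<open>x \<in> verts G\<close> unfolding isolated_def by auto
      then have "\<not> adj G (\<iota> y) (?e x)"
        using h(3) \<iota>(2) \<open>y \<in> isolated G\<close> by blast
      then show "\<not> adj G (?e x) (\<iota> y)"
        using graphD[OF gr, of "?e x" "\<iota> y"] by blast
    qed
  qed
  moreover have "?e ` verts G \<subseteq> nonisolated G"
    using embedding_nonisolated[OF gr h(1)] \<iota>(2) A unfolding isolated_def by auto
  ultimately show ?thesis
    by (rule many_siblings_of_embedding_into_nonisolated[OF assms(1-3)])
qed

lemma absorbable_image:
  assumes gr: "graph G" and grK: "graph K" and j: "embedding j G K" and k: "embedding k K G"
    and S: "S \<subseteq> isolated K" "k ` S \<subseteq> nonisolated G"
  shows "absorbable G (k ` S)"
proof -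
  have S_verts: "s \<in> verts K" "s \<notin> nonisolated K" if "s \<in> S" for s
    using S(1) that unfolding isolated_def by blast+
  have j_verts: "j y \<in> verts K" "j y \<in> nonisolated K" if "y \<in> nonisolated G" for y
    using embedding_nonisolated[OF gr j that] nonisolated_subset[OF grK] by blast+
  have k_inj: "inj_on k (verts K)" and k_adj: "\<And>s t. s \<in> verts K \<Longrightarrow> t \<in> verts K \<Longrightarrow> adj G (k s) (k t) \<longleftrightarrow> adj K s t"
    using k unfolding embedding_def by blast+
  have "k s \<noteq> k (j y)" if "s \<in> S" "y \<in> nonisolated G" for s y
    using inj_on_eq_iff[OF k_inj S_verts(1)[OF that(1)] j_verts(1)[OF that(2)]]
      S_verts(2)[OF that(1)] j_verts(2)[OF that(2)] by auto
  then have "k ` S \<inter> (k \<circ> j) ` nonisolated G = {}"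
    by auto
  moreover have "\<not> adj G (k s) (k t)" if "s \<in> S" "t \<in> verts K" for s t
    using k_adj[OF S_verts(1)[OF that(1)] that(2)] isolated_not_adj(1)[OF grK S_verts(2)[OF that(1)]]
    by simp
  then have "\<forall>a\<in>k ` S. \<forall>w\<in>(k \<circ> j) ` nonisolated G \<union> k ` S. \<not> adj G a w"
    using j_verts(1) S_verts(1) by auto
  ultimately show ?thesis
    unfolding absorbable_def using S(2) embedding_comp[OF j k] by blast
qed

section \<open>Matching the nontrivial components of a sibling\<close>

text \<open>Follow the cycle of \<open>C\<close> under \<open>\<tau>\<close> from \<open>\<tau> C\<close> back to \<open>C\<close>.\<close>

lemma embeds_permutation_back:
  assumes "finite A" "bij_betw \<tau> A A" "\<forall>C\<in>A. embeds (P C) (P (\<tau> C))" "C \<in> A"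
  shows "embeds (P (\<tau> C)) (P C)"
proof -
  define p where "p x = (if x \<in> A then \<tau> x else x)" for x
  have p: "p permutes A"
    using assms(2) by (intro bij_imp_permutes) (auto simp: p_def bij_betw_def inj_on_def)
  have "{y. \<exists>n. y = (p ^^ n) C} \<subseteq> A"
    using permutes_in_funpow_image[OF p assms(4)] by blast
  then obtain n where "n > 0" "(p ^^ n) C = C"
    using funpow_inj_finite[OF permutes_inj[OF p]] finite_subset[OF _ assms(1)] by metis
  then obtain k where k: "(p ^^ Suc k) C = C"
    using gr0_conv_Suc by auto
  have "embeds (P (p C)) (P ((p ^^ Suc j) C))" for j
  proof (induction j)
    case 0
    then show ?case
      using embeds_refl by simp
  next
    case (Suc j)
    have "(p ^^ Suc j) C \<in> A"
      using permutes_in_funpow_image[OF p assms(4)] .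
    then have "embeds (P ((p ^^ Suc j) C)) (P ((p ^^ Suc (Suc j)) C))"
      using assms(3) by (simp add: p_def)
    then show ?case
      using Suc.IH embeds_trans by blast
  qed
  then show ?thesis
    using k assms(4) by (metis p_def)
qed

definition component_image :: "('a \<Rightarrow> 'b) \<Rightarrow> 'b graph \<Rightarrow> 'a set \<Rightarrow> 'b set" where
  "component_image f H C = component_verts H (f (SOME x. x \<in> C))"

lemma component_image_eq:
  assumes "graph G" "graph H" "embedding f G H" "x \<in> verts G"
  shows "component_image f H (component_verts G x) = component_verts H (f x)"
proof -
  have "(SOME y. y \<in> component_verts G x) \<in> component_verts G x"
    using component_verts_self[OF assms(4)] by (rule someI)
  then have "reach G x (SOME y. y \<in> component_verts G x)"
    by (simp add: component_verts_def)
  then have "reach H (f x) (f (SOME y. y \<in> component_verts G x))"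
    by (rule embedding_reach[OF assms(1,3)])
  then show ?thesis
    unfolding component_image_def using component_verts_eq[OF assms(2)] by metis
qed

lemma component_image_in_nontrivial_components:
  assumes "graph G" "graph H" "embedding f G H" "C \<in> nontrivial_components G"
  shows "component_image f H C \<in> nontrivial_components H"
proof -
  obtain x where x: "x \<in> nonisolated G" "C = component_verts G x"
    using assms(4) by (rule nontrivial_componentsE)
  then have "component_image f H C = component_verts H (f x)"
    using component_image_eq[OF assms(1-3)] nonisolated_subset[OF assms(1)] by blast
  then show ?thesis
    using component_in_nontrivial_components[OF embedding_nonisolated[OF assms(1,3) x(1)]] by simp
qed

lemma embedding_component_image:
  assumes "graph G" "graph H" "embedding f G H" "C \<in> nontrivial_components G"
  shows "embedding f (induced G C) (induced H (component_image f H C))"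
proof -
  obtain x where x: "x \<in> nonisolated G" "C = component_verts G x"
    using assms(4) by (rule nontrivial_componentsE)
  then have "x \<in> verts G"
    using nonisolated_subset[OF assms(1)] by blast
  then show ?thesis
    using embedding_induced[OF assms(3) component_verts_subset embedding_component_verts[OF assms(1,3)]]
      component_image_eq[OF assms(1-3)] x(2) by simp
qed

lemma component_image_comp:
  assumes "graph G" "graph H" "graph K" "embedding f G H" "embedding g H K"
    and "C \<in> nontrivial_components G"
  shows "component_image (g \<circ> f) K C = component_image g K (component_image f H C)"
proof -
  obtain x where x: "x \<in> nonisolated G" "C = component_verts G x"
    using assms(6) by (rule nontrivial_componentsE)
  then have "x \<in> verts G" "f x \<in> verts H"
    using nonisolated_subset[OF assms(1)] assms(4) unfolding embedding_def by blast+
  then show ?thesis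
    using component_image_eq[OF assms(1,3) embedding_comp[OF assms(4,5)]]
      component_image_eq[OF assms(1,2,4)] component_image_eq[OF assms(2,3,5)] x(2) by simp
qed

lemma component_image_onto:
  assumes "graph G" "graph G'" "finite (nontrivial_components G)"
    and "\<not> many_disconnected_siblings G" "embedding f G G'" "embedding g G' G"
  shows "component_image f G' ` nontrivial_components G = nontrivial_components G'"
proof
  show "component_image f G' ` nontrivial_components G \<subseteq> nontrivial_components G'"
    using component_image_in_nontrivial_components[OF assms(1,2,5)] by blast
next
  show "nontrivial_components G' \<subseteq> component_image f G' ` nontrivial_components G"
  proof
    fix D assume "D \<in> nontrivial_components G'"
    then obtain d where d: "d \<in> nonisolated G'" "D = component_verts G' d"
      by (rule nontrivial_componentsE)
    obtain x where x: "x \<in> nonisolated G" "reach G' (f x) d"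
      using many_siblings_of_missed_component[OF assms(1-3,5,6) d(1)] assms(4) by blast
    have "D = component_image f G' (component_verts G x)"
      using component_verts_eq[OF assms(2) x(2)] component_image_eq[OF assms(1,2,5)]
        nonisolated_subset[OF assms(1)] x(1) d(2) by auto
    then show "D \<in> component_image f G' ` nontrivial_components G"
      using component_in_nontrivial_components[OF x(1)] by blast
  qed
qed

text \<open>The component map of the self-embedding \<open>g \<circ> f\<close> permutes the finitely many
  nontrivial components, so every component \<open>C\<close> embeds into its image under \<open>f\<close> and back.\<close>

lemma components_match:
  fixes G G' :: "'a graph"
  assumes gr: "graph G" and gr': "graph G'" and fin: "finite (nontrivial_components G)"
    and unique: "\<forall>H \<in> components G. \<forall>H' :: 'a graph.
      graph H' \<and> connected_graph H' \<and> equimorphic H' H \<longrightarrow> iso H' H"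
    and few: "\<not> many_disconnected_siblings G"
    and f: "embedding f G G'" and g: "embedding g G' G"
  shows "bij_betw (component_image f G') (nontrivial_components G) (nontrivial_components G')"
    "\<And>C. C \<in> nontrivial_components G \<Longrightarrow> iso (induced G' (component_image f G' C)) (induced G C)"
proof -
  let ?\<phi> = "component_image f G'" and ?\<tau> = "component_image (g \<circ> f) G"
  have h: "embedding (g \<circ> f) G G"
    using embedding_comp[OF f g] .
  have \<phi>_onto: "?\<phi> ` nontrivial_components G = nontrivial_components G'"
    using component_image_onto[OF gr gr' fin few f g] .
  have \<tau>_onto: "?\<tau> ` nontrivial_components G = nontrivial_components G"
    using component_image_onto[OF gr gr fin few h embedding_id] .
  then have \<tau>_bij: "bij_betw ?\<tau> (nontrivial_components G) (nontrivial_components G)"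
    using finite_surj_inj[OF fin] unfolding bij_betw_def by simp
  have \<tau>_\<phi>: "?\<tau> C = component_image g G (?\<phi> C)" if "C \<in> nontrivial_components G" for C
    using component_image_comp[OF gr gr' gr f g that] .
  have "inj_on ?\<phi> (nontrivial_components G)"
    using \<tau>_bij \<tau>_\<phi> unfolding bij_betw_def inj_on_def by metis
  then show "bij_betw ?\<phi> (nontrivial_components G) (nontrivial_components G')"
    using \<phi>_onto unfolding bij_betw_def by blast
  fix C assume C: "C \<in> nontrivial_components G"
  have into_\<tau>: "embeds (induced G D) (induced G (?\<tau> D))" if "D \<in> nontrivial_components G" for D
    using embedding_component_image[OF gr gr h that] unfolding embeds_iff_embedding by blast
  have "embeds (induced G' (?\<phi> C)) (induced G (?\<tau> C))"
    using embedding_component_image[OF gr' gr g component_image_in_nontrivial_components[OF gr gr' f C]]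
      \<tau>_\<phi>[OF C] unfolding embeds_iff_embedding by auto
  moreover have "embeds (induced G (?\<tau> C)) (induced G C)"
    using embeds_permutation_back[OF fin \<tau>_bij _ C, of "induced G"] into_\<tau> by blast
  moreover have "embeds (induced G C) (induced G' (?\<phi> C))"
    using embedding_component_image[OF gr gr' f C] unfolding embeds_iff_embedding by blast
  ultimately have "equimorphic (induced G' (?\<phi> C)) (induced G C)"
    unfolding equimorphic_def using embeds_trans by blast
  moreover have "connected_graph (induced G' (?\<phi> C))"
    using nontrivial_component_in_components(2)[OF gr' component_image_in_nontrivial_components[OF gr gr' f C]] .
  ultimately show "iso (induced G' (?\<phi> C)) (induced G C)"
    using unique nontrivial_component_in_components(1)[OF gr C] graph_induced[OF gr', of "?\<phi> C"]
    by blast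
qed

section \<open>Counting the isolated vertices of a sibling\<close>

unbundle cardinal_syntax

lemma absorbable_small:
  assumes "graph G" "finite (nontrivial_components G)" "\<not> many_disconnected_siblings G"
    and "absorbable G A"
  shows "A = {} \<or> infinite (isolated G) \<and> |A| <o |isolated G|"
proof (cases "finite (isolated G)")
  case True
  then show ?thesis
    using many_siblings_of_absorbable[OF assms(1,2) True assms(4)] assms(3) by blast
next
  case False
  have "\<not> |isolated G| \<le>o |A|"
  proof
    assume "|isolated G| \<le>o |A|"
    then obtain \<iota> where "inj_on \<iota> (isolated G)" "\<iota> ` isolated G \<subseteq> A"
      using card_of_ordLeq[of "isolated G" A] by blast
    then show False
      using many_siblings_of_large_absorbable[OF assms(1,2) False assms(4)] assms(3) by blast
  qed
  then show ?thesis
    using False not_ordLeq_iff_ordLess[OF card_of_Well_order card_of_Well_order] by blast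
qed

lemma card_of_Diff_small:
  assumes "infinite I" "|B| <o |I|"
  shows "|I| \<le>o |I - B|"
proof -
  have "\<not> |I - B| <o |I|"
  proof
    assume "|I - B| <o |I|"
    then have "|B \<union> (I - B)| <o |I|"
      using card_of_Un_ordLess_infinite[OF assms] by blast
    moreover have "|I| \<le>o |B \<union> (I - B)|"
      by (rule card_of_mono1) blast
    ultimately show False
      using ordLeq_ordLess_trans ordLess_irreflexive by blast
  qed
  then show ?thesis
    using not_ordLess_iff_ordLeq[OF card_of_Well_order card_of_Well_order] by blast
qed

lemma card_of_Un_small:
  assumes "infinite I" "|A| <o |I|"
  shows "|A \<union> I| \<le>o |I|"
proof (rule card_of_Un_ordLeq_infinite_Field)
  show "\<not> finite (Field (card_of I))"
    using assms(1) by (simp add: Field_card_of)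
  show "|A| \<le>o |I|"
    using assms(2) by (rule ordLess_imp_ordLeq)
  show "|I| \<le>o |I|"
    by (rule card_of_mono1) simp
qed (rule card_of_Card_order)

text \<open>In the next two lemmas the isolated vertices that the embeddings send to non-isolated
  ones form absorbable sets, which are negligible.\<close>

lemma card_isolated_le_sibling:
  assumes gr: "graph G" and gr': "graph G'" and fin: "finite (nontrivial_components G)"
    and few: "\<not> many_disconnected_siblings G"
    and f: "embedding f G G'" and g: "embedding g G' G"
  shows "|isolated G| \<le>o |isolated G'|"
proof -
  let ?h = "g \<circ> f" and ?I = "isolated G"
  define B where "B = {x \<in> ?I. f x \<in> nonisolated G'}"
  have h: "embedding ?h G G"
    using embedding_comp[OF f g] .
  have B: "B \<subseteq> ?I" "B \<subseteq> verts G"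
    unfolding B_def isolated_def by blast+
  have "?h ` B \<subseteq> nonisolated G"
    using embedding_nonisolated[OF gr' g] unfolding B_def by auto
  then have small: "?h ` B = {} \<or> infinite ?I \<and> |?h ` B| <o |?I|"
    by (rule absorbable_small[OF gr fin few absorbable_image[OF gr gr embedding_id h B(1)]])
  have f_inj: "inj_on f (verts G)" and h_inj: "inj_on ?h (verts G)"
    using f h unfolding embedding_def by blast+
  have "|?I| \<le>o |?I - B|"
  proof (cases "B = {}")
    case True
    then show ?thesis
      by (simp add: card_of_mono1)
  next
    case False
    then have "infinite ?I" "|?h ` B| <o |?I|"
      using small by simp_all
    moreover have "|B| \<le>o |?h ` B|"
      using inj_on_subset[OF h_inj B(2)] card_of_ordLeq[of B "?h ` B"] by blast
    ultimately show ?thesis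
      using card_of_Diff_small ordLeq_ordLess_trans by blast
  qed
  moreover have "|?I - B| \<le>o |isolated G'|"
  proof -
    have "?I - B \<subseteq> verts G"
      unfolding isolated_def by blast
    then have "inj_on f (?I - B)"
      by (rule inj_on_subset[OF f_inj])
    moreover have "f x \<in> isolated G'" if "x \<in> ?I - B" for x
    proof -
      have "x \<in> verts G" "f x \<notin> nonisolated G'"
        using that unfolding B_def isolated_def by blast+
      then show ?thesis
        using f unfolding isolated_def embedding_def by blast
    qed
    ultimately show ?thesis
      using card_of_ordLeq[of "?I - B" "isolated G'"] by blast
  qed
  ultimately show ?thesis
    using ordLeq_transitive by blast
qed

lemma card_isolated_ge_sibling:
  assumes gr: "graph G" and gr': "graph G'" and fin: "finite (nontrivial_components G)"
    and few: "\<not> many_disconnected_siblings G"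
    and f: "embedding f G G'" and g: "embedding g G' G"
  shows "|isolated G'| \<le>o |isolated G|"
proof -
  let ?I = "isolated G" and ?I' = "isolated G'"
  define S where "S = {x \<in> ?I'. g x \<in> nonisolated G}"
  have "S \<subseteq> ?I'" "g ` S \<subseteq> nonisolated G"
    unfolding S_def by blast+
  then have small: "g ` S = {} \<or> infinite ?I \<and> |g ` S| <o |?I|"
    by (rule absorbable_small[OF gr fin few absorbable_image[OF gr gr' f g]])
  have "?I' \<subseteq> verts G'"
    unfolding isolated_def by blast
  then have "inj_on g ?I'"
    using g unfolding embedding_def by (blast intro: inj_on_subset)
  moreover have "g x \<in> g ` S \<union> ?I" if "x \<in> ?I'" for x
  proof (cases "g x \<in> nonisolated G")
    case True
    then show ?thesis
      using that unfolding S_def by blast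
  next
    case False
    then show ?thesis
      using that g unfolding isolated_def embedding_def by blast
  qed
  ultimately have "|?I'| \<le>o |g ` S \<union> ?I|"
    using card_of_ordLeq[of ?I' "g ` S \<union> ?I"] by blast
  moreover have "|g ` S \<union> ?I| \<le>o |?I|"
  proof (cases "g ` S = {}")
    case True
    then show ?thesis
      by (simp add: card_of_mono1)
  next
    case False
    then show ?thesis
      using small card_of_Un_small by blast
  qed
  ultimately show ?thesis
    using ordLeq_transitive by blast
qed

lemma isolated_bij:
  assumes "graph G" "graph G'" "finite (nontrivial_components G)"
    and "\<not> many_disconnected_siblings G" "embedding f G G'" "embedding g G' G"
  shows "\<exists>\<beta>. bij_betw \<beta> (isolated G) (isolated G')"
  using card_isolated_le_sibling[OF assms] card_isolated_ge_sibling[OF assms]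
    card_of_ordIso ordIso_iff_ordLeq by blast

section \<open>Gluing isomorphisms of components\<close>

locale glued_isos =
  fixes G :: "'a graph" and H :: "'b graph" and \<P> :: "'a set set" and \<Phi> :: "'a set \<Rightarrow> 'b set"
    and \<sigma> :: "'a set \<Rightarrow> 'a \<Rightarrow> 'b" and \<pi> :: "'a \<Rightarrow> 'a set"
  assumes G_cover: "\<Union>\<P> = verts G" and H_cover: "\<Union>(\<Phi> ` \<P>) = verts H"
    and \<Phi>_inj: "inj_on \<Phi> \<P>" and \<Phi>_disjoint: "pairwise disjnt (\<Phi> ` \<P>)"
    and G_closed: "\<And>x y. adj G x y \<Longrightarrow> \<exists>P\<in>\<P>. x \<in> P \<and> y \<in> P"
    and H_closed: "\<And>x y. adj H x y \<Longrightarrow> \<exists>Q\<in>\<Phi> ` \<P>. x \<in> Q \<and> y \<in> Q"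
    and \<sigma>: "\<And>P. P \<in> \<P> \<Longrightarrow> embedding (\<sigma> P) (induced G P) (induced H (\<Phi> P)) \<and> \<sigma> P ` P = \<Phi> P"
    and \<pi>: "\<And>x. x \<in> verts G \<Longrightarrow> \<pi> x \<in> \<P> \<and> x \<in> \<pi> x"
    and \<pi>_unique: "\<And>x P. x \<in> P \<Longrightarrow> P \<in> \<P> \<Longrightarrow> \<pi> x = P"
begin

definition glued :: "'a \<Rightarrow> 'b" where
  "glued x = \<sigma> (\<pi> x) x"

lemma glued_in: "x \<in> verts G \<Longrightarrow> glued x \<in> \<Phi> (\<pi> x)"
  using \<sigma> \<pi> unfolding glued_def by blast

lemma glued_adj_iff_same_part:
  assumes "P \<in> \<P>" "x \<in> P" "y \<in> P"
  shows "adj G x y \<longleftrightarrow> adj H (glued x) (glued y)"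
  using \<sigma>[OF assms(1)] assms \<pi>_unique[OF assms(2,1)] \<pi>_unique[OF assms(3,1)]
  unfolding glued_def embedding_def by auto

lemma same_part:
  assumes "x \<in> verts G" "y \<in> verts G" "z \<in> \<Phi> (\<pi> x)" "z \<in> \<Phi> (\<pi> y)"
  shows "\<pi> x = \<pi> y"
proof -
  have "\<Phi> (\<pi> x) = \<Phi> (\<pi> y)"
    using assms \<pi> \<Phi>_disjoint unfolding pairwise_def disjnt_def by blast
  then show ?thesis
    using assms(1,2) \<pi> \<Phi>_inj unfolding inj_on_def by blast
qed

lemma inj_glued: "inj_on glued (verts G)"
proof (rule inj_onI)
  fix x y assume xy: "x \<in> verts G" "y \<in> verts G" "glued x = glued y"
  then have "\<pi> x = \<pi> y"
    using same_part glued_in by metis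
  then show "x = y"
    using \<sigma>[of "\<pi> x"] \<pi> xy unfolding glued_def embedding_def inj_on_def by auto
qed

lemma glued_onto: "glued ` verts G = verts H"
proof
  show "glued ` verts G \<subseteq> verts H"
    using glued_in \<pi> H_cover by blast
  show "verts H \<subseteq> glued ` verts G"
  proof
    fix z assume "z \<in> verts H"
    then obtain P x where "P \<in> \<P>" "x \<in> P" "z = \<sigma> P x"
      using H_cover \<sigma> by blast
    moreover have "x \<in> verts G"
      using calculation(1,2) G_cover by blast
    ultimately show "z \<in> glued ` verts G"
      using \<pi>_unique unfolding glued_def by blast
  qed
qed

lemma adj_glued_iff:
  assumes "x \<in> verts G" "y \<in> verts G"
  shows "adj G x y \<longleftrightarrow> adj H (glued x) (glued y)"
proof
  assume "adj G x y"
  then show "adj H (glued x) (glued y)"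
    using G_closed glued_adj_iff_same_part by blast
next
  assume adj: "adj H (glued x) (glued y)"
  then obtain P where "P \<in> \<P>" "glued x \<in> \<Phi> P" "glued y \<in> \<Phi> P"
    using H_closed by blast
  then have "\<pi> x = P" "\<pi> y = P"
    using same_part[of x x] same_part[of y y] glued_in assms \<pi> \<Phi>_disjoint \<Phi>_inj
    unfolding pairwise_def disjnt_def inj_on_def by (metis disjoint_iff imageI)+
  then show "adj G x y"
    using glued_adj_iff_same_part \<pi> assms adj by metis
qed

lemma glued_iso: "iso G H"
  unfolding iso_def bij_betw_def using inj_glued glued_onto adj_glued_iff by blast

end

lemma iso_of_parts:
  assumes "\<Union>\<P> = verts G" "\<Union>\<Q> = verts H" "pairwise disjnt \<P>" "pairwise disjnt \<Q>"
    and "\<And>x y. adj G x y \<Longrightarrow> \<exists>P\<in>\<P>. x \<in> P \<and> y \<in> P"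
    and "\<And>x y. adj H x y \<Longrightarrow> \<exists>Q\<in>\<Q>. x \<in> Q \<and> y \<in> Q"
    and \<Phi>: "bij_betw \<Phi> \<P> \<Q>" and "\<And>P. P \<in> \<P> \<Longrightarrow> iso (induced G P) (induced H (\<Phi> P))"
  shows "iso G H"
proof -
  obtain \<sigma> where \<sigma>: "\<And>P. P \<in> \<P> \<Longrightarrow> embedding (\<sigma> P) (induced G P) (induced H (\<Phi> P)) \<and> \<sigma> P ` P = \<Phi> P"
    using assms(8) unfolding iso_iff_embedding by (metis verts_induced)
  have "\<forall>x\<in>verts G. \<exists>P. P \<in> \<P> \<and> x \<in> P"
    using assms(1) by blast
  then have "\<exists>\<pi>. \<forall>x\<in>verts G. \<pi> x \<in> \<P> \<and> x \<in> \<pi> x"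
    by (rule bchoice)
  then obtain \<pi> where \<pi>: "\<And>x. x \<in> verts G \<Longrightarrow> \<pi> x \<in> \<P> \<and> x \<in> \<pi> x"
    by blast
  have "\<pi> x = P" if "x \<in> P" "P \<in> \<P>" for x P
    using \<pi>[of x] that assms(1,3) unfolding pairwise_def disjnt_def by blast
  then interpret glued_isos G H \<P> \<Phi> \<sigma> \<pi>
    using assms(1,2,4-6) \<Phi> \<sigma> \<pi> unfolding bij_betw_def by unfold_locales simp_all
  show ?thesis
    by (rule glued_iso)
qed

lemma iso_singleton:
  assumes "graph G" "graph H" "x \<in> verts G" "y \<in> verts H"
  shows "iso (induced G {x}) (induced H {y})"
  unfolding iso_def using graphD[OF assms(1), of x x] graphD[OF assms(2), of y y]
  by (intro exI[of _ "\<lambda>_. y"]) (auto simp: bij_betw_def)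

lemma bij_betw_singletons:
  assumes "bij_betw f A B"
  shows "bij_betw (\<lambda>P. f ` P) ((\<lambda>x. {x}) ` A) ((\<lambda>x. {x}) ` B)"
proof -
  have "inj_on (\<lambda>P. f ` P) ((\<lambda>x. {x}) ` A)"
    using assms unfolding bij_betw_def inj_on_def by auto
  moreover have "(\<lambda>P. f ` P) ` (\<lambda>x. {x}) ` A = (\<lambda>x. {x}) ` f ` A"
    by (simp add: image_image)
  ultimately show ?thesis
    using assms unfolding bij_betw_def by simp
qed

lemma iso_of_matching:
  assumes gr: "graph G" and gr': "graph G'"
    and \<phi>: "bij_betw \<phi> (nontrivial_components G) (nontrivial_components G')"
    and iso_\<phi>: "\<And>C. C \<in> nontrivial_components G \<Longrightarrow> iso (induced G C) (induced G' (\<phi> C))"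
    and \<beta>: "bij_betw \<beta> (isolated G) (isolated G')"
  shows "iso G G'"
proof -
  define \<Psi> where "\<Psi> P = (if P \<in> nontrivial_components G then \<phi> P else \<beta> ` P)" for P
  have "bij_betw \<Psi> (nontrivial_components G) (nontrivial_components G')"
    using \<phi> by (rule bij_betw_cong[THEN iffD1, rotated]) (simp add: \<Psi>_def)
  moreover have "bij_betw \<Psi> ((\<lambda>x. {x}) ` isolated G) ((\<lambda>x. {x}) ` isolated G')"
  proof -
    have bij: "bij_betw (\<lambda>P. \<beta> ` P) ((\<lambda>x. {x}) ` isolated G) ((\<lambda>x. {x}) ` isolated G')"
      using \<beta> by (rule bij_betw_singletons)
    have "\<beta> ` P = \<Psi> P" if P: "P \<in> (\<lambda>x. {x}) ` isolated G" for P
    proof -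
      obtain x where "x \<in> isolated G" "P = {x}"
        using P by blast
      then show ?thesis
        using singleton_not_nontrivial_component[OF gr] unfolding \<Psi>_def by simp
    qed
    then show ?thesis
      using bij by (rule bij_betw_cong[THEN iffD1])
  qed
  moreover have "nontrivial_components G' \<inter> (\<lambda>x. {x}) ` isolated G' = {}"
    using singleton_not_nontrivial_component[OF gr'] by blast
  ultimately have \<Psi>: "bij_betw \<Psi> (component_verts G ` verts G) (component_verts G' ` verts G')"
    unfolding component_sets_eq[OF gr] component_sets_eq[OF gr'] by (rule bij_betw_combine)
  have parts_iso: "iso (induced G P) (induced G' (\<Psi> P))" if "P \<in> component_verts G ` verts G" for P
  proof (cases "P \<in> nontrivial_components G")
    case True
    then show ?thesis
      using iso_\<phi> unfolding \<Psi>_def by simp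
  next
    case False
    then have "P \<in> (\<lambda>x. {x}) ` isolated G"
      using that unfolding component_sets_eq[OF gr] by simp
    then obtain x where x: "x \<in> isolated G" "P = {x}"
      by blast
    then have "x \<in> verts G" "\<beta> x \<in> verts G'"
      using bij_betwE[OF \<beta>] unfolding isolated_def by blast+
    then show ?thesis
      using False iso_singleton[OF gr gr'] x(2) unfolding \<Psi>_def by simp
  qed
  have closed: "\<And>x y. adj G x y \<Longrightarrow> \<exists>P\<in>component_verts G ` verts G. x \<in> P \<and> y \<in> P"
    "\<And>x y. adj G' x y \<Longrightarrow> \<exists>Q\<in>component_verts G' ` verts G'. x \<in> Q \<and> y \<in> Q"
    by (rule component_sets_closed[OF gr], assumption) (rule component_sets_closed[OF gr'])
  show ?thesis
    by (rule iso_of_parts[OF component_sets_cover component_sets_cover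
        component_sets_disjoint[OF gr] component_sets_disjoint[OF gr'] closed \<Psi> parts_iso])
qed

theorem lemma2p1:
  fixes G :: "'a graph"
  assumes "graph G"
    and "disconnected G"
    and "finite {H \<in> components G. \<not> trivial_component H}"
    and "\<forall>H \<in> components G. \<forall>H' :: 'a graph.
           graph H' \<and> connected_graph H' \<and> equimorphic H' H \<longrightarrow> iso H' H"
  shows "(\<exists>S :: 'a graph set. infinite S \<and>
            (\<forall>G' \<in> S. sibling G' G \<and> disconnected G') \<and>
            (\<forall>G1 \<in> S. \<forall>G2 \<in> S. G1 \<noteq> G2 \<longrightarrow> \<not> iso G1 G2))
         \<or> (\<forall>G' :: 'a graph. sibling G' G \<longrightarrow> iso G' G)"
proof (cases "many_disconnected_siblings G")
  case True
  then show ?thesis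
    unfolding many_disconnected_siblings_def by blast
next
  case few: False
  have fin: "finite (nontrivial_components G)"
    using finite_nontrivial_components[OF assms(1,3)] .
  have "iso G' G" if sib: "sibling G' G" for G' :: "'a graph"
  proof -
    obtain f g where gr': "graph G'" and f: "embedding f G G'" and g: "embedding g G' G"
      using sib unfolding sibling_def equimorphic_def embeds_iff_embedding by blast
    obtain \<beta> where "bij_betw \<beta> (isolated G) (isolated G')"
      using isolated_bij[OF assms(1) gr' fin few f g] by blast
    then have "iso G G'"
      using components_match[OF assms(1) gr' fin assms(4) few f g] iso_sym
      by (intro iso_of_matching[OF assms(1) gr']) blast+
    then show ?thesis
      by (rule iso_sym)
  qed
  then show ?thesis
    by blast
qed

end
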